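(* Let $q\in[1,\infty)$ and let $(X,d_X)$ be a $q$-barycentric metric space that contains a geodesic segment (an isometric copy of a nondegenerate interval of $\mathbb{R}$). Then $q\ge2$.
   Context: For $q\in[1,\infty)$, $\beta>0$, a metric space $(X,d_X)$ is $q$-barycentric with constant $\beta$ if there is a map $\mathfrak{B}$ from finitely supported probability measures on $X$ to $X$, with $\mathfrak{B}(\delta_x)=x$, such that $d_X(\mathfrak{B}(\mu),x)^q+\beta^{-q}\int_X d_X(\mathfrak{B}(\mu),y)^q\,d\mu(y)\le\int_X d_X(x,y)^q\,d\mu(y)$ for all $x\in X$ and finitely supported probability measures $\mu$; $q$-barycentric means this holds for some $\beta$. *)

theory Defs
  imports "HOL-Analysis.Analysis" "HOL-Probability.Probability_Mass_Function"
begin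

text \<open>Finitely supported probability measures on X are pmfs with finite support;
  integrals against them are finite weighted sums.\<close>

definition barycentric_map :: "real \<Rightarrow> real \<Rightarrow> ('a::metric_space pmf \<Rightarrow> 'a) \<Rightarrow> bool" where
  "barycentric_map q \<beta> B \<longleftrightarrow>
     (\<forall>x. B (return_pmf x) = x) \<and>
     (\<forall>\<mu> x. finite (set_pmf \<mu>) \<longrightarrow>
        dist (B \<mu>) x powr q
          + \<beta> powr (-q) * (\<Sum>y\<in>set_pmf \<mu>. pmf \<mu> y * dist (B \<mu>) y powr q)
        \<le> (\<Sum>y\<in>set_pmf \<mu>. pmf \<mu> y * dist x y powr q))"

definition q_barycentric :: "'a::metric_space itself \<Rightarrow> real \<Rightarrow> bool" where
  "q_barycentric (_::'a itself) q \<longleftrightarrow> (\<exists>\<beta>>0. \<exists>B::'a pmf \<Rightarrow> 'a. barycentric_map q \<beta> B)"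

definition has_geodesic_segment :: "'a::metric_space itself \<Rightarrow> bool" where
  "has_geodesic_segment (_::'a itself) \<longleftrightarrow>
     (\<exists>a b. \<exists>\<gamma>::real \<Rightarrow> 'a. a < b \<and>
        (\<forall>s\<in>{a..b}. \<forall>t\<in>{a..b}. dist (\<gamma> s) (\<gamma> t) = \<bar>s - t\<bar>))"

end

theory Submission
  imports Defs
begin

text \<open>Put two equal masses at distance \<open>2e\<close> symmetrically about the midpoint of a geodesic
  segment of half-length \<open>L\<close>, and test the barycentric inequality at both endpoints of the
  segment. By convexity of \<open>r \<mapsto> r powr q\<close> the two left-hand sides add up to at least
  \<open>2 L powr q + 2 \<beta> powr (-q) e powr q\<close>, whereas the right-hand sides add up to
  \<open>(L + e) powr q + (L - e) powr q\<close>, which for \<open>q < 2\<close> exceeds \<open>2 L powr q\<close> only by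
  \<open>O(e\<^sup>2 L powr (q - 2))\<close>. Letting \<open>e/L \<rightarrow> 0\<close> contradicts \<open>e powr q \<gg> e\<^sup>2\<close>.\<close>

lemma powr_ge_tangent_line:
  fixes z q :: real
  assumes "0 \<le> z" "1 \<le> q"
  shows "1 + q * (z - 1) \<le> z powr q"
proof (cases "z = 0")
  case True
  then show ?thesis using assms by simp
next
  case False
  with assms have "z > 0" by simp
  have "(z powr q) powr (1/q) * 1 powr (1 - 1/q) \<le> (1/q) * z powr q + (1 - 1/q) * 1"
    by (rule Youngs_inequality_0) (use assms \<open>z > 0\<close> in auto)
  moreover have "(z powr q) powr (1/q) = z" using assms \<open>z > 0\<close> by (simp add: powr_powr)
  ultimately have "q * z \<le> q * (z powr q / q + (1 - 1/q))"
    using assms by (simp add: mult_left_mono)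
  also have "\<dots> = z powr q + q - 1" using assms by (simp add: field_simps)
  finally show ?thesis by (simp add: algebra_simps)
qed

lemma powr_le_tangent_line:
  fixes z a :: real
  assumes "0 < z" "0 \<le> a" "a \<le> 1"
  shows "z powr a \<le> 1 + a * (z - 1)"
proof -
  have "z powr a * 1 powr (1 - a) \<le> a * z + (1 - a) * 1"
    by (rule Youngs_inequality_0) (use assms in auto)
  then show ?thesis by (simp add: algebra_simps)
qed

lemma two_powr_le_powr_add:
  fixes u v L q :: real
  assumes "0 \<le> u" "0 \<le> v" "0 < L" "2 * L \<le> u + v" "1 \<le> q"
  shows "2 * L powr q \<le> u powr q + v powr q"
proof -
  have tangent: "L powr q * (1 + q * (w / L - 1)) \<le> w powr q" if "0 \<le> w" for w
  proof -
    have "1 + q * (w / L - 1) \<le> (w / L) powr q"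
      by (rule powr_ge_tangent_line) (use assms that in auto)
    then show ?thesis using assms that by (simp add: powr_divide field_simps)
  qed
  have "2 \<le> (u + v) / L" using assms by (simp add: field_simps)
  then have "0 \<le> q * ((u + v) / L - 2)" using assms by simp
  then have "2 * L powr q \<le> L powr q * (2 + q * ((u + v) / L - 2))"
    using mult_left_mono[of 2 "2 + q * ((u + v) / L - 2)" "L powr q"] by (simp add: mult.commute)
  also have "\<dots> = L powr q * (1 + q * (u / L - 1)) + L powr q * (1 + q * (v / L - 1))"
    by (simp add: algebra_simps add_divide_distrib)
  also have "\<dots> \<le> u powr q + v powr q"
    using tangent[OF assms(1)] tangent[OF assms(2)] by (rule add_mono)
  finally show ?thesis .
qed

lemma powr_one_plus_add_powr_one_minus_le:
  fixes t q :: real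
  assumes "0 \<le> t" "t < 1" "0 \<le> q" "q \<le> 2"
  shows "(1 + t) powr q + (1 - t) powr q \<le> 2 + q * t\<^sup>2"
proof -
  have "w powr q \<le> 1 + (q/2) * (w\<^sup>2 - 1)" if "0 < w" for w :: real
  proof -
    have "w powr q = (w powr (2::real)) powr (q/2)"
      by (simp only: powr_powr) simp
    also have "\<dots> = (w\<^sup>2) powr (q/2)"
      using that by (simp add: powr_realpow)
    also have "\<dots> \<le> 1 + (q/2) * (w\<^sup>2 - 1)"
      by (rule powr_le_tangent_line) (use assms that in auto)
    finally show ?thesis .
  qed
  from this[of "1 + t"] this[of "1 - t"] assms show ?thesis
    by (simp add: power2_eq_square algebra_simps)
qed

lemma exists_square_lt_const_mult_powr:
  fixes K q :: real
  assumes "0 < K" "q < 2"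
  obtains t where "0 < t" "t < 1" "t\<^sup>2 < K * t powr q"
proof
  define t where "t = min (1/2) ((K/2) powr (1 / (2 - q)))"
  show "0 < t" "t < 1" using assms by (auto simp: t_def)
  have "t powr (2 - q) \<le> ((K/2) powr (1 / (2 - q))) powr (2 - q)"
    using \<open>0 < t\<close> assms by (intro powr_mono2) (auto simp: t_def)
  also have "\<dots> = K/2" using assms by (simp add: powr_powr)
  finally have "t powr (2 - q) \<le> K/2" .
  have "t\<^sup>2 = t powr q * t powr (2 - q)"
    using \<open>0 < t\<close> by (simp flip: powr_add)
  also have "\<dots> \<le> t powr q * (K/2)"
    using \<open>t powr (2 - q) \<le> K/2\<close> by (rule mult_left_mono) simp
  also have "\<dots> < K * t powr q"
    using assms \<open>0 < t\<close> by simp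
  finally show "t\<^sup>2 < K * t powr q" .
qed

lemma barycentric_map_two_points:
  fixes B :: "'a::metric_space pmf \<Rightarrow> 'a"
  assumes "barycentric_map q \<beta> B" "y\<^sub>1 \<noteq> y\<^sub>2"
  defines "m \<equiv> B (pmf_of_set {y\<^sub>1, y\<^sub>2})"
  shows "2 * dist m x powr q + \<beta> powr (-q) * (dist m y\<^sub>1 powr q + dist m y\<^sub>2 powr q)
           \<le> dist x y\<^sub>1 powr q + dist x y\<^sub>2 powr q"
proof -
  let ?\<mu> = "pmf_of_set {y\<^sub>1, y\<^sub>2}"
  have mean: "(\<Sum>y\<in>set_pmf ?\<mu>. pmf ?\<mu> y * f y) = (f y\<^sub>1 + f y\<^sub>2) / 2" for f :: "'a \<Rightarrow> real"
    using assms(2) by simp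
  have "finite (set_pmf ?\<mu>)" by simp
  then have "dist m x powr q + \<beta> powr (-q) * (\<Sum>y\<in>set_pmf ?\<mu>. pmf ?\<mu> y * dist m y powr q)
               \<le> (\<Sum>y\<in>set_pmf ?\<mu>. pmf ?\<mu> y * dist x y powr q)"
    using assms(1) unfolding barycentric_map_def m_def by blast
  then show ?thesis unfolding mean by (simp add: field_simps)
qed

lemma barycentric_map_segment_ineq:
  fixes B :: "'a::metric_space pmf \<Rightarrow> 'a" and \<gamma> :: "real \<Rightarrow> 'a"
  assumes bar: "barycentric_map q \<beta> B" and "1 \<le> q"
    and iso: "\<forall>s\<in>{c-L..c+L}. \<forall>r\<in>{c-L..c+L}. dist (\<gamma> s) (\<gamma> r) = \<bar>s - r\<bar>"
    and "0 < e" "e \<le> L"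
  shows "2 * L powr q + 2 * \<beta> powr (-q) * e powr q \<le> (L + e) powr q + (L - e) powr q"
proof -
  let ?K = "\<beta> powr (-q)" and ?y\<^sub>1 = "\<gamma> (c - e)" and ?y\<^sub>2 = "\<gamma> (c + e)"
  define m where "m = B (pmf_of_set {?y\<^sub>1, ?y\<^sub>2})"
  define M where "M = dist m ?y\<^sub>1 powr q + dist m ?y\<^sub>2 powr q"
  have dist_y: "dist ?y\<^sub>1 ?y\<^sub>2 = 2 * e" using iso assms(4,5) by auto
  have dist_ends: "dist (\<gamma> (c - L)) (\<gamma> (c + L)) = 2 * L" using iso assms(4,5) by auto
  have "?y\<^sub>1 \<noteq> ?y\<^sub>2" using dist_y assms(4) by auto
  note test = barycentric_map_two_points[OF bar this, folded m_def, folded M_def]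
  have "2 * dist m (\<gamma> (c - L)) powr q + ?K * M \<le> (L + e) powr q + (L - e) powr q"
    using test[of "\<gamma> (c - L)"] iso assms(4,5) by (simp add: add.commute)
  moreover have "2 * dist m (\<gamma> (c + L)) powr q + ?K * M \<le> (L + e) powr q + (L - e) powr q"
    using test[of "\<gamma> (c + L)"] iso assms(4,5) by (simp add: dist_commute add.commute)
  moreover have "2 * L powr q \<le> dist m (\<gamma> (c - L)) powr q + dist m (\<gamma> (c + L)) powr q"
    using two_powr_le_powr_add dist_ends dist_triangle[of "\<gamma> (c - L)" "\<gamma> (c + L)" m] assms
    by (simp add: dist_commute)
  moreover have "2 * e powr q \<le> M"
    using two_powr_le_powr_add dist_y dist_triangle[of ?y\<^sub>1 ?y\<^sub>2 m] assms
    by (simp add: M_def dist_commute)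
  then have "?K * (2 * e powr q) \<le> ?K * M" by (rule mult_left_mono) simp
  ultimately show ?thesis by linarith
qed

lemma barycentric_map_segment_ineq_normalized:
  fixes B :: "'a::metric_space pmf \<Rightarrow> 'a" and \<gamma> :: "real \<Rightarrow> 'a"
  assumes bar: "barycentric_map q \<beta> B" and "1 \<le> q" and "a < b"
    and iso: "\<forall>s\<in>{a..b}. \<forall>r\<in>{a..b}. dist (\<gamma> s) (\<gamma> r) = \<bar>s - r\<bar>"
    and "0 < t" "t < 1"
  shows "2 + 2 * \<beta> powr (-q) * t powr q \<le> (1 + t) powr q + (1 - t) powr q"
proof -
  define L where "L = (b - a) / 2"
  have "L > 0" using \<open>a < b\<close> by (simp add: L_def)
  have "{(a + b) / 2 - L..(a + b) / 2 + L} = {a..b}" by (simp add: L_def field_simps)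
  moreover have "0 < t * L" "t * L \<le> L" using \<open>L > 0\<close> assms(5,6) by auto
  ultimately have "2 * L powr q + 2 * \<beta> powr (-q) * (t * L) powr q
                     \<le> (L + t * L) powr q + (L - t * L) powr q"
    using barycentric_map_segment_ineq[OF bar \<open>1 \<le> q\<close>, of "(a + b) / 2" L \<gamma> "t * L"] iso
    by simp
  moreover have "(L + t * L) powr q = L powr q * (1 + t) powr q"
    using powr_mult[of L "1 + t" q] \<open>L > 0\<close> \<open>0 < t\<close> by (simp add: algebra_simps)
  moreover have "(L - t * L) powr q = L powr q * (1 - t) powr q"
    using powr_mult[of L "1 - t" q] \<open>L > 0\<close> \<open>t < 1\<close> by (simp add: algebra_simps)
  moreover have "(t * L) powr q = L powr q * t powr q"
    using powr_mult[of t L q] \<open>L > 0\<close> \<open>0 < t\<close> by (simp add: algebra_simps)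
  ultimately have "L powr q * (2 + 2 * \<beta> powr (-q) * t powr q)
                     \<le> L powr q * ((1 + t) powr q + (1 - t) powr q)"
    by (simp add: algebra_simps)
  then show ?thesis using \<open>L > 0\<close> by simp
qed

theorem mainTheorem15:
  fixes q :: real
  assumes "1 \<le> q"
    and "q_barycentric TYPE('a::metric_space) q"
    and "has_geodesic_segment TYPE('a)"
  shows "2 \<le> q"
proof (rule ccontr)
  assume "\<not> 2 \<le> q"
  obtain \<beta> and B :: "'a pmf \<Rightarrow> 'a" where "\<beta> > 0" and bar: "barycentric_map q \<beta> B"
    using assms(2) unfolding q_barycentric_def by blast
  obtain a b and \<gamma> :: "real \<Rightarrow> 'a" where "a < b"
    and iso: "\<forall>s\<in>{a..b}. \<forall>r\<in>{a..b}. dist (\<gamma> s) (\<gamma> r) = \<bar>s - r\<bar>"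
    using assms(3) unfolding has_geodesic_segment_def by blast
  obtain t where t: "0 < t" "t < 1" "t\<^sup>2 < \<beta> powr (-q) * t powr q"
    using exists_square_lt_const_mult_powr[of "\<beta> powr (-q)" q] \<open>\<beta> > 0\<close> \<open>\<not> 2 \<le> q\<close> by auto
  have "2 + 2 * \<beta> powr (-q) * t powr q \<le> (1 + t) powr q + (1 - t) powr q"
    using barycentric_map_segment_ineq_normalized[OF bar assms(1) \<open>a < b\<close> iso t(1,2)] .
  also have "\<dots> \<le> 2 + q * t\<^sup>2"
    using powr_one_plus_add_powr_one_minus_le[of t q] t assms(1) \<open>\<not> 2 \<le> q\<close> by simp
  also have "\<dots> \<le> 2 + 2 * t\<^sup>2"
    using mult_right_mono[of q 2 "t\<^sup>2"] \<open>\<not> 2 \<le> q\<close> by simp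
  finally show False using t(3) by simp
qed

end
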